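(* Let $G$ be a finitely generated group and let $F$ be the free group with basis $\{x,y,z\}$. (i) If the fixed-target submonoid membership problem for the element $xy^{-1}$ in the free product $G\ast F$ is decidable, then the rational subset membership problem in $G$ is decidable. (ii) If there is an algorithm which, given a finite subset $\Delta\subseteq G\ast F$, decides whether $\mathrm{Sgp}(xy^{-1})\cap\mathrm{Sgp}(\Delta)=\varnothing$ in $G\ast F$, then the rational subset membership problem in $G$ is decidable.
   Context: For a group $H$ with finite generating set $A$ and canonical surjection $\pi:(A\cup A^{-1})^*\to H$: $\mathrm{Mon}(X)$ and $\mathrm{Sgp}(X)$ denote the submonoid and subsemigroup generated by $X$. The fixed-target submonoid membership problem for a fixed element $\gamma\in H$ asks, on input a finite set $X$ of words, whether $\gamma\in\mathrm{Mon}(\pi(X))$. A subset of $H$ is rational if it equals $\pi(L)$ for some regular language $L$; the rational subset membership problem asks, given a finite automaton $\mathcal A$ and a word $w$, whether $\pi(w)\in\pi(L(\mathcal A))$. *)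

theory Defs
  imports "HOL-Algebra.Generated_Groups" "HOL-Library.Nat_Bijection"
begin

datatype recf = Zero | Succ | Proj nat | Comp recf "recf list"
  | Prim recf recf | Mini recf

inductive eval :: "recf \<Rightarrow> nat list \<Rightarrow> nat \<Rightarrow> bool" where
  eval_Zero: "eval Zero xs 0"
| eval_Succ: "eval Succ (x # xs) (Suc x)"
| eval_Proj: "i < length xs \<Longrightarrow> eval (Proj i) xs (xs ! i)"
| eval_Comp: "list_all2 (\<lambda>g y. eval g xs y) gs ys \<Longrightarrow> eval f ys z \<Longrightarrow> eval (Comp f gs) xs z"
| eval_Prim0: "eval f xs y \<Longrightarrow> eval (Prim f g) (0 # xs) y"
| eval_PrimS: "eval (Prim f g) (n # xs) r \<Longrightarrow> eval g (n # r # xs) y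
     \<Longrightarrow> eval (Prim f g) (Suc n # xs) y"
| eval_Mini: "eval f (n # xs) 0 \<Longrightarrow> (\<forall>m<n. \<exists>v. eval f (m # xs) (Suc v))
     \<Longrightarrow> eval (Mini f) xs n"

definition decidable :: "('x \<Rightarrow> nat) \<Rightarrow> 'x set \<Rightarrow> ('x \<Rightarrow> bool) \<Rightarrow> bool" where
  "decidable enc V P \<longleftrightarrow> (\<exists>r. \<forall>x\<in>V. eval r [enc x] (if P x then 1 else 0))"

text \<open>A letter (i, b) is the i-th generator, inverted iff b = True.\<close>
type_synonym letter = "nat \<times> bool"
type_synonym word = "letter list"

fun enc_list :: "nat list \<Rightarrow> nat" where
  "enc_list [] = 0"
| "enc_list (x # xs) = Suc (prod_encode (x, enc_list xs))"

definition enc_letter :: "letter \<Rightarrow> nat" where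
  "enc_letter l = prod_encode (fst l, if snd l then 1 else 0)"

definition enc_word :: "word \<Rightarrow> nat" where
  "enc_word w = enc_list (map enc_letter w)"

definition enc_words :: "word list \<Rightarrow> nat" where
  "enc_words ws = enc_list (map enc_word ws)"

definition word_over :: "nat \<Rightarrow> word \<Rightarrow> bool" where
  "word_over k w \<longleftrightarrow> (\<forall>l\<in>set w. fst l < k)"

text \<open>Finite automaton: transitions (p, a, q), initial states, final states.\<close>
type_synonym nfa = "(nat \<times> letter \<times> nat) list \<times> nat list \<times> nat list"

fun nfa_path :: "(nat \<times> letter \<times> nat) list \<Rightarrow> nat \<Rightarrow> word \<Rightarrow> nat \<Rightarrow> bool" where
  "nfa_path T p [] q \<longleftrightarrow> p = q"
| "nfa_path T p (a # w) q \<longleftrightarrow> (\<exists>r. (p, a, r) \<in> set T \<and> nfa_path T r w q)"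

definition nfa_lang :: "nfa \<Rightarrow> word set" where
  "nfa_lang A = {w. \<exists>p\<in>set (fst (snd A)). \<exists>q\<in>set (snd (snd A)). nfa_path (fst A) p w q}"

definition nfa_over :: "nat \<Rightarrow> nfa \<Rightarrow> bool" where
  "nfa_over k A \<longleftrightarrow> (\<forall>(p, a, q)\<in>set (fst A). fst a < k)"

definition enc_nfa :: "nfa \<Rightarrow> nat" where
  "enc_nfa A = prod_encode
     (enc_list (map (\<lambda>(p, a, q). prod_encode (p, prod_encode (enc_letter a, q))) (fst A)),
      prod_encode (enc_list (fst (snd A)), enc_list (snd (snd A))))"

definition piG :: "('a, 'b) monoid_scheme \<Rightarrow> 'a list \<Rightarrow> word \<Rightarrow> 'a" where
  "piG G gens w = foldr (\<lambda>l acc. (if snd l then inv\<^bsub>G\<^esub> (gens ! fst l) else gens ! fst l) \<otimes>\<^bsub>G\<^esub> acc)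
      w \<one>\<^bsub>G\<^esub>"

text \<open>The free product G * F with F free on {x,y,z}: presented on generators
  0..k-1 (those of G, k = length gens) and x = k, y = k+1, z = k+2, with relators
  all relators of G. fp_eq is the congruence on words defining equality in G * F.\<close>
inductive fp_eq :: "('a, 'b) monoid_scheme \<Rightarrow> 'a list \<Rightarrow> word \<Rightarrow> word \<Rightarrow> bool"
  for G gens where
  fp_refl: "fp_eq G gens u u"
| fp_sym: "fp_eq G gens u v \<Longrightarrow> fp_eq G gens v u"
| fp_trans: "fp_eq G gens u v \<Longrightarrow> fp_eq G gens v w \<Longrightarrow> fp_eq G gens u w"
| fp_cancel: "fp_eq G gens (u @ [(a, b), (a, \<not> b)] @ v) (u @ v)"
| fp_rel: "word_over (length gens) r \<Longrightarrow> piG G gens r = \<one>\<^bsub>G\<^esub>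
     \<Longrightarrow> fp_eq G gens (u @ r @ v) (u @ v)"

definition fp_mon_mem :: "('a, 'b) monoid_scheme \<Rightarrow> 'a list \<Rightarrow> word list \<Rightarrow> word \<Rightarrow> bool" where
  "fp_mon_mem G gens X g \<longleftrightarrow> (\<exists>ws. set ws \<subseteq> set X \<and> fp_eq G gens (concat ws) g)"

definition fp_sgp_mem :: "('a, 'b) monoid_scheme \<Rightarrow> 'a list \<Rightarrow> word list \<Rightarrow> word \<Rightarrow> bool" where
  "fp_sgp_mem G gens X g \<longleftrightarrow> (\<exists>ws. ws \<noteq> [] \<and> set ws \<subseteq> set X \<and> fp_eq G gens (concat ws) g)"

definition word_xyinv :: "nat \<Rightarrow> word" where
  "word_xyinv k = [(k, False), (Suc k, True)]"

definition fp_sgp_disjoint :: "('a, 'b) monoid_scheme \<Rightarrow> 'a list \<Rightarrow> word list \<Rightarrow> bool" where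
  "fp_sgp_disjoint G gens D \<longleftrightarrow>
     \<not> (\<exists>g. fp_sgp_mem G gens [word_xyinv (length gens)] g \<and> fp_sgp_mem G gens D g)"

definition FT_submonoid_xyinv_decidable :: "('a, 'b) monoid_scheme \<Rightarrow> 'a list \<Rightarrow> bool" where
  "FT_submonoid_xyinv_decidable G gens \<longleftrightarrow>
     decidable enc_words {X. \<forall>w\<in>set X. word_over (length gens + 3) w}
       (\<lambda>X. fp_mon_mem G gens X (word_xyinv (length gens)))"

definition sgp_disjoint_decidable :: "('a, 'b) monoid_scheme \<Rightarrow> 'a list \<Rightarrow> bool" where
  "sgp_disjoint_decidable G gens \<longleftrightarrow>
     decidable enc_words {D. \<forall>w\<in>set D. word_over (length gens + 3) w}
       (fp_sgp_disjoint G gens)"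

definition rational_membership_decidable :: "('a, 'b) monoid_scheme \<Rightarrow> 'a list \<Rightarrow> bool" where
  "rational_membership_decidable G gens \<longleftrightarrow>
     decidable (\<lambda>(A, w). prod_encode (enc_nfa A, enc_word w))
       {(A, w). nfa_over (length gens) A \<and> word_over (length gens) w}
       (\<lambda>(A, w). piG G gens w \<in> piG G gens ` nfa_lang A)"

end

theory Submission
  imports Defs "HOL-Library.Sublist"
begin

text \<open>Given an automaton A and a word w over the generators of G, every initial state p,
  transition (p, a, q) and final state q of A yields a word of G * F, namely x s_p^-1,
  s_p a s_q^-1 and s_q w^-1 y^-1 with s_p = z^(p+1) x z^-(p+1).  Products of these words that
  reduce freely to a power of x y^-1 are exactly those following accepting paths u of A, and they
  equal x u w^-1 y^-1; so x y^-1 lies in the submonoid they generate, or Sgp(x y^-1) meets the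
  subsemigroup they generate, iff w represents an element of the rational subset given by A.
  For the hard direction G * F acts on G-labelled vertices of the Cayley tree of the free group
  on a_i = z^i x z^-i (with a_-1 = y); an invariant of this action reads off an accepting path
  from the label at a_0.  Since the words are computable from (A, w), a decision procedure for
  either problem decides rational subset membership in G.\<close>

section \<open>Computable functions\<close>

definition computable :: "nat \<Rightarrow> (nat list \<Rightarrow> nat) \<Rightarrow> bool" where
  "computable n F \<longleftrightarrow> (\<exists>r. \<forall>xs. length xs = n \<longrightarrow> eval r xs (F xs))"

lemma computable_cong:
  "computable m F \<Longrightarrow> m = n \<Longrightarrow> (\<And>xs. length xs = n \<Longrightarrow> F xs = G xs) \<Longrightarrow> computable n G"
  unfolding computable_def by metis

lemma computable_zero: "computable n (\<lambda>_. 0)"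
  unfolding computable_def by (auto intro: eval_Zero)

lemma computable_proj: "i < n \<Longrightarrow> computable n (\<lambda>xs. xs ! i)"
  unfolding computable_def by (auto intro!: exI[of _ "Proj i"] eval_Proj)

lemma computable_Suc_hd: "computable 1 (\<lambda>xs. Suc (hd xs))"
  unfolding computable_def
  by (rule exI[of _ Succ]) (auto simp: length_Suc_conv intro: eval_Succ)

lemma computable_list_all2:
  assumes "\<forall>G\<in>set Gs. computable n G"
  shows "\<exists>rs. \<forall>xs. length xs = n \<longrightarrow> list_all2 (\<lambda>g y. eval g xs y) rs (map (\<lambda>G. G xs) Gs)"
  using assms
proof (induction Gs)
  case (Cons G Gs)
  then obtain rs where "\<forall>xs. length xs = n \<longrightarrow> list_all2 (\<lambda>g y. eval g xs y) rs (map (\<lambda>G. G xs) Gs)"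
    by auto
  moreover obtain r where "\<forall>xs. length xs = n \<longrightarrow> eval r xs (G xs)"
    using Cons.prems by (auto simp: computable_def)
  ultimately show ?case by (intro exI[of _ "r # rs"]) auto
qed simp

lemma computable_comp:
  assumes "computable m F" "length Gs = m" "\<forall>G\<in>set Gs. computable n G"
  shows "computable n (\<lambda>xs. F (map (\<lambda>G. G xs) Gs))"
proof -
  obtain f where "\<forall>ys. length ys = m \<longrightarrow> eval f ys (F ys)"
    using assms(1) by (auto simp: computable_def)
  moreover obtain rs where "\<forall>xs. length xs = n \<longrightarrow> list_all2 (\<lambda>g y. eval g xs y) rs (map (\<lambda>G. G xs) Gs)"
    using computable_list_all2[OF assms(3)] by auto
  ultimately show ?thesis
    unfolding computable_def using assms(2) by (intro exI[of _ "Comp f rs"]) (auto intro: eval_Comp)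
qed

lemma computable_comp1: "computable 1 F \<Longrightarrow> computable n g \<Longrightarrow> computable n (\<lambda>xs. F [g xs])"
  using computable_comp[of 1 F "[g]" n] by auto

lemma computable_comp2:
  "computable 2 F \<Longrightarrow> computable n g \<Longrightarrow> computable n h \<Longrightarrow> computable n (\<lambda>xs. F [g xs, h xs])"
  using computable_comp[of 2 F "[g, h]" n] by auto

lemma computable_comp3:
  "computable 3 F \<Longrightarrow> computable n g \<Longrightarrow> computable n h \<Longrightarrow> computable n j
    \<Longrightarrow> computable n (\<lambda>xs. F [g xs, h xs, j xs])"
  using computable_comp[of 3 F "[g, h, j]" n] by auto

lemma map_nth_upt: "length xs = n \<Longrightarrow> map (\<lambda>i. xs ! i) [0..<n] = xs"
  by (rule nth_equalityI) auto

lemma map_nth_Suc_upt: "length ys = Suc m \<Longrightarrow> map (\<lambda>i. ys ! Suc i) [0..<m] = tl ys"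
  by (rule nth_equalityI) (auto simp: nth_tl)

lemma computable_tl:
  assumes "computable m F" shows "computable (Suc m) (\<lambda>ys. F (tl ys))"
proof -
  have "computable (Suc m) (\<lambda>ys. F (map (\<lambda>G. G ys) (map (\<lambda>i ys. ys ! Suc i) [0..<m])))"
    by (rule computable_comp[OF assms]) (auto intro: computable_proj)
  then show ?thesis by (rule computable_cong) (simp_all add: comp_def map_nth_Suc_upt)
qed

lemma computable_Cons_arg:
  assumes "computable (Suc n) P" "computable n K"
  shows "computable n (\<lambda>xs. P (K xs # xs))"
proof -
  have "computable n (\<lambda>xs. P (map (\<lambda>G. G xs) (K # map (\<lambda>i xs. xs ! i) [0..<n])))"
    by (rule computable_comp[OF assms(1)]) (auto intro: assms(2) computable_proj)
  then show ?thesis by (rule computable_cong) (simp_all add: comp_def map_nth_upt)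
qed

lemma computable_Cons2_arg:
  assumes "computable (Suc (Suc n)) F" "computable (Suc n) a" "computable (Suc n) b"
  shows "computable (Suc n) (\<lambda>ys. F (a ys # b ys # tl ys))"
proof -
  have "computable (Suc n) (\<lambda>ys. F (map (\<lambda>G. G ys) (a # b # map (\<lambda>i ys. ys ! Suc i) [0..<n])))"
    by (rule computable_comp[OF assms(1)]) (auto intro: assms computable_proj)
  then show ?thesis by (rule computable_cong) (simp_all add: comp_def map_nth_Suc_upt)
qed

fun prim_rec :: "(nat list \<Rightarrow> nat) \<Rightarrow> (nat list \<Rightarrow> nat) \<Rightarrow> nat \<Rightarrow> nat list \<Rightarrow> nat" where
  "prim_rec F G 0 ys = F ys"
| "prim_rec F G (Suc k) ys = G (k # prim_rec F G k ys # ys)"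

lemma computable_prim_rec:
  assumes "computable n F" "computable (Suc (Suc n)) G"
  shows "computable (Suc n) (\<lambda>xs. prim_rec F G (hd xs) (tl xs))"
proof -
  obtain f where f: "\<forall>ys. length ys = n \<longrightarrow> eval f ys (F ys)"
    using assms(1) by (auto simp: computable_def)
  obtain g where g: "\<forall>ys. length ys = Suc (Suc n) \<longrightarrow> eval g ys (G ys)"
    using assms(2) by (auto simp: computable_def)
  have "eval (Prim f g) (k # ys) (prim_rec F G k ys)" if "length ys = n" for k ys
    using that
  proof (induction k)
    case (Suc k)
    then show ?case using g by (auto intro: eval_PrimS)
  qed (use f in \<open>auto intro: eval_Prim0\<close>)
  then show ?thesis
    unfolding computable_def by (intro exI[of _ "Prim f g"]) (auto simp: length_Suc_conv)
qed

lemma computable_const: "computable n (\<lambda>_. c)"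
  by (induction c) (use computable_zero computable_comp1[OF computable_Suc_hd] in auto)

lemma computable_Suc: "computable n g \<Longrightarrow> computable n (\<lambda>xs. Suc (g xs))"
  using computable_comp1[OF computable_Suc_hd] by simp

lemma computable_iterate:
  assumes "computable (Suc n) S" "computable n K" "computable n A"
  shows "computable n (\<lambda>xs. ((\<lambda>a. S (a # xs)) ^^ K xs) (A xs))"
proof -
  have "prim_rec A (\<lambda>zs. S (tl zs)) j xs = ((\<lambda>a. S (a # xs)) ^^ j) (A xs)" for j xs
    by (induction j) auto
  then show ?thesis
    using computable_Cons_arg[OF computable_prim_rec[OF assms(3) computable_tl[OF assms(1)]] assms(2)]
    by simp
qed

lemma computable_prim_rec_eq:
  assumes "computable n F" "computable (Suc (Suc n)) G"
    and "\<And>k ys. prim_rec F G k ys = H (k # ys)"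
  shows "computable (Suc n) H"
  using computable_prim_rec[OF assms(1,2)]
  by (rule computable_cong) (auto simp: length_Suc_conv assms(3))

lemma computable_add: "computable n g \<Longrightarrow> computable n h \<Longrightarrow> computable n (\<lambda>xs. g xs + h xs)"
proof -
  have "computable 2 (\<lambda>xs. xs ! 0 + xs ! 1)"
    unfolding numeral_2_eq_2
  proof (rule computable_prim_rec_eq[where F="\<lambda>ys. ys ! 0" and G="\<lambda>zs. Suc (zs ! 1)"])
    show "prim_rec (\<lambda>ys. ys ! 0) (\<lambda>zs. Suc (zs ! 1)) k ys = (k # ys) ! 0 + (k # ys) ! 1" for k ys
      by (induction k) auto
  qed (intro computable_proj computable_Suc; simp)+
  then show "computable n g \<Longrightarrow> computable n h \<Longrightarrow> ?thesis"
    using computable_comp2[of "\<lambda>xs. xs ! 0 + xs ! 1"] by simp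
qed

lemma computable_pred: "computable n g \<Longrightarrow> computable n (\<lambda>xs. g xs - 1)"
proof -
  have "computable 1 (\<lambda>xs. xs ! 0 - 1)"
    unfolding One_nat_def
  proof (rule computable_prim_rec_eq[where F="\<lambda>_. 0" and G="\<lambda>zs. zs ! 0"])
    show "prim_rec (\<lambda>_. 0) (\<lambda>zs. zs ! 0) k ys = (k # ys) ! 0 - Suc 0" for k ys
      by (induction k) auto
  qed (intro computable_zero computable_proj; simp)+
  then show "computable n g \<Longrightarrow> ?thesis"
    using computable_comp1[of "\<lambda>xs. xs ! 0 - 1"] by simp
qed

lemma computable_diff: "computable n g \<Longrightarrow> computable n h \<Longrightarrow> computable n (\<lambda>xs. g xs - h xs)"
proof -
  have "computable 2 (\<lambda>xs. xs ! 1 - xs ! 0)"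
    unfolding numeral_2_eq_2
  proof (rule computable_prim_rec_eq[where F="\<lambda>ys. ys ! 0" and G="\<lambda>zs. zs ! 1 - 1"])
    show "prim_rec (\<lambda>ys. ys ! 0) (\<lambda>zs. zs ! 1 - 1) k ys = (k # ys) ! 1 - (k # ys) ! 0" for k ys
      by (induction k) auto
  qed (intro computable_pred computable_proj; simp)+
  then show "computable n g \<Longrightarrow> computable n h \<Longrightarrow> ?thesis"
    using computable_comp2[of "\<lambda>xs. xs ! 1 - xs ! 0" n h g] by simp
qed

lemma computable_if_zero:
  assumes "computable n c" "computable n g" "computable n h"
  shows "computable n (\<lambda>xs. if c xs = 0 then g xs else h xs)"
proof -
  have "computable 3 (\<lambda>xs. if xs ! 0 = 0 then xs ! 1 else xs ! 2)"
    unfolding numeral_3_eq_3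
  proof (rule computable_prim_rec_eq[where F="\<lambda>ys. ys ! 0" and G="\<lambda>zs. zs ! 3"])
    show "prim_rec (\<lambda>ys. ys ! 0) (\<lambda>zs. zs ! 3) k ys =
      (if (k # ys) ! 0 = 0 then (k # ys) ! 1 else (k # ys) ! 2)" for k ys
      by (cases k) auto
  qed (intro computable_proj; simp)+
  from computable_comp3[OF this assms] show ?thesis
    by (rule computable_cong) (simp_all add: numeral_2_eq_2)
qed

lemma computable_if_le:
  "computable n a \<Longrightarrow> computable n b \<Longrightarrow> computable n g \<Longrightarrow> computable n h
    \<Longrightarrow> computable n (\<lambda>xs. if a xs \<le> b xs then g xs else h xs)"
  using computable_if_zero[OF computable_diff, of n a b g h] by simp

lemma computable_triangle: "computable n g \<Longrightarrow> computable n (\<lambda>xs. triangle (g xs))"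
proof -
  have "computable 1 (\<lambda>xs. triangle (xs ! 0))"
    unfolding One_nat_def
  proof (rule computable_prim_rec_eq[where F="\<lambda>_. 0" and G="\<lambda>zs. zs ! 1 + Suc (zs ! 0)"])
    show "prim_rec (\<lambda>_. 0) (\<lambda>zs. zs ! 1 + Suc (zs ! 0)) k ys = triangle ((k # ys) ! 0)" for k ys
      by (induction k) auto
  qed (intro computable_zero computable_add computable_Suc computable_proj; simp)+
  then show "computable n g \<Longrightarrow> ?thesis"
    using computable_comp1[of "\<lambda>xs. triangle (xs ! 0)"] by simp
qed

lemma computable_prod_encode:
  "computable n g \<Longrightarrow> computable n h \<Longrightarrow> computable n (\<lambda>xs. prod_encode (g xs, h xs))"
  unfolding prod_encode_def by (simp add: computable_add computable_triangle)

definition prod_diag :: "nat \<Rightarrow> nat" where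
  "prod_diag n = fst (prod_decode n) + snd (prod_decode n)"

lemma triangle_mono: "m \<le> m' \<Longrightarrow> triangle m \<le> triangle m'"
  unfolding triangle_def by (intro div_le_mono mult_le_mono) auto

lemma triangle_prod_diag: "triangle (prod_diag n) \<le> n" "n < triangle (Suc (prod_diag n))"
  and fst_prod_decode_eq: "fst (prod_decode n) = n - triangle (prod_diag n)"
proof -
  obtain a b where ab: "prod_decode n = (a, b)" by (cases "prod_decode n")
  have "n = prod_encode (a, b)" using prod_decode_inverse[of n] ab by simp
  then show "triangle (prod_diag n) \<le> n" "n < triangle (Suc (prod_diag n))"
    "fst (prod_decode n) = n - triangle (prod_diag n)"
    using ab by (auto simp: prod_encode_def prod_diag_def)
qed

lemma le_triangle: "m \<le> triangle m"
  by (induction m) auto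

lemma prod_diag_le: "prod_diag n \<le> n"
  using le_triangle[of "prod_diag n"] triangle_prod_diag(1)[of n] by simp

text \<open>The diagonal of n is found by counting up while the next triangle number is at most n.\<close>

lemma computable_prod_diag: "computable n g \<Longrightarrow> computable n (\<lambda>xs. prod_diag (g xs))"
proof -
  let ?G = "\<lambda>zs. if triangle (Suc (zs ! 1)) \<le> zs ! 2 then Suc (zs ! 1) else zs ! 1"
  have "computable 2 (\<lambda>xs. min (xs ! 0) (prod_diag (xs ! 1)))"
    unfolding numeral_2_eq_2
  proof (rule computable_prim_rec_eq[where F="\<lambda>_. 0" and G="?G"])
    show "prim_rec (\<lambda>_. 0) ?G k ys = min ((k # ys) ! 0) (prod_diag ((k # ys) ! 1))" for k ys
    proof (induction k)
      case (Suc k)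
      let ?d = "prod_diag (ys ! 0)"
      show ?case
      proof (cases "k < ?d")
        case True
        then have "triangle (Suc k) \<le> ys ! 0"
          using triangle_mono[of "Suc k" ?d] triangle_prod_diag(1)[of "ys ! 0"] by (simp del: triangle_Suc)
        then show ?thesis using Suc True by simp
      next
        case False
        then show ?thesis using Suc triangle_prod_diag(2)[of "ys ! 0"] by (simp del: triangle_Suc)
      qed
    qed simp
  qed (intro computable_zero computable_if_le computable_triangle computable_Suc computable_proj; simp)+
  then show "computable n g \<Longrightarrow> ?thesis"
    using computable_comp2[of "\<lambda>xs. min (xs ! 0) (prod_diag (xs ! 1))" n g g]
    by (simp add: min_absorb2[OF prod_diag_le])
qed

lemma computable_fst_prod_decode: "computable n g \<Longrightarrow> computable n (\<lambda>xs. fst (prod_decode (g xs)))"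
  unfolding fst_prod_decode_eq by (intro computable_diff computable_triangle computable_prod_diag)

lemma computable_snd_prod_decode: "computable n g \<Longrightarrow> computable n (\<lambda>xs. snd (prod_decode (g xs)))"
proof -
  have "snd (prod_decode m) = prod_diag m - fst (prod_decode m)" for m
    by (simp add: prod_diag_def)
  then show "computable n g \<Longrightarrow> ?thesis"
    by (simp add: computable_diff computable_prod_diag computable_fst_prod_decode)
qed

lemma snd_prod_decode_le: "snd (prod_decode n) \<le> n"
  by (metis le_prod_encode_2 prod.collapse prod_decode_inverse)

function dec_list :: "nat \<Rightarrow> nat list" where
  "dec_list 0 = []"
| "dec_list (Suc n) = fst (prod_decode n) # dec_list (snd (prod_decode n))"
  by pat_completeness auto
termination
  by (relation "measure id") (auto simp: le_imp_less_Suc snd_prod_decode_le)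

lemma enc_list_dec_list [simp]: "enc_list (dec_list c) = c"
  by (induction c rule: dec_list.induct) auto

lemma dec_list_enc_list [simp]: "dec_list (enc_list xs) = xs"
  by (induction xs) auto

lemma length_dec_list_le: "length (dec_list c) \<le> c"
proof (induction c rule: dec_list.induct)
  case (2 n)
  then show ?case using snd_prod_decode_le[of n] by simp
qed simp

text \<open>A fold over a coded list runs as an iteration on pairs (remaining code, accumulator),
  with the list length bounded by its code.\<close>

definition fold_step :: "(nat list \<Rightarrow> nat) \<Rightarrow> nat list \<Rightarrow> nat" where
  "fold_step F ys = (let (c, a) = prod_decode (ys ! 0) in
     if c = 0 then ys ! 0
     else prod_encode (snd (prod_decode (c - 1)), F (a # fst (prod_decode (c - 1)) # tl ys)))"

lemma computable_fold_step: "computable (Suc (Suc n)) F \<Longrightarrow> computable (Suc n) (fold_step F)"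
  unfolding fold_step_def Let_def case_prod_beta
  by (intro computable_if_zero computable_fst_prod_decode computable_snd_prod_decode computable_proj
      computable_prod_encode computable_pred computable_Cons2_arg) auto

lemma fold_step_iterate:
  "length (dec_list c) \<le> j \<Longrightarrow> ((\<lambda>st. fold_step F (st # xs)) ^^ j) (prod_encode (c, a))
     = prod_encode (0, foldl (\<lambda>a x. F (a # x # xs)) a (dec_list c))"
proof (induction j arbitrary: c a)
  case 0
  then show ?case by (cases c) auto
next
  case (Suc j)
  then show ?case
    by (cases c) (simp_all only: funpow_Suc_right comp_apply, auto simp: fold_step_def)
qed

lemma computable_foldl:
  assumes "computable (Suc (Suc n)) F" "computable n C" "computable n A"
  shows "computable n (\<lambda>xs. foldl (\<lambda>a x. F (a # x # xs)) (A xs) (dec_list (C xs)))"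
proof -
  have "computable n (\<lambda>xs. snd (prod_decode
          (((\<lambda>st. fold_step F (st # xs)) ^^ C xs) (prod_encode (C xs, A xs)))))"
    by (intro computable_snd_prod_decode computable_iterate computable_fold_step assms
        computable_prod_encode)
  then show ?thesis by (rule computable_cong) (simp_all add: fold_step_iterate length_dec_list_le)
qed

definition computable_list :: "nat \<Rightarrow> (nat list \<Rightarrow> nat list) \<Rightarrow> bool" where
  "computable_list n L \<longleftrightarrow> computable n (\<lambda>xs. enc_list (L xs))"

lemma computable_list_dec_list: "computable n C \<Longrightarrow> computable_list n (\<lambda>xs. dec_list (C xs))"
  by (simp add: computable_list_def)

lemma computable_list_Nil: "computable_list n (\<lambda>_. [])"
  unfolding computable_list_def by (simp add: computable_zero)

lemma computable_list_Cons:
  "computable n h \<Longrightarrow> computable_list n L \<Longrightarrow> computable_list n (\<lambda>xs. h xs # L xs)"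
  unfolding computable_list_def by (simp add: computable_Suc computable_prod_encode)

lemma foldl_enc_list_Cons:
  "foldl (\<lambda>a x. Suc (prod_encode (f x, a))) (enc_list ys) l = enc_list (rev (map f l) @ ys)"
  by (induction l arbitrary: ys) (simp_all flip: enc_list.simps)

lemma computable_list_rev_map_append:
  assumes "computable (Suc n) g" "computable_list n L" "computable_list n M"
  shows "computable_list n (\<lambda>xs. rev (map (\<lambda>x. g (x # xs)) (L xs)) @ M xs)"
proof -
  have "computable (Suc (Suc n)) (\<lambda>zs. Suc (prod_encode (g (tl zs), zs ! 0)))"
    by (intro computable_Suc computable_prod_encode computable_proj computable_tl assms(1)) simp
  from computable_foldl[OF this, of "\<lambda>xs. enc_list (L xs)" "\<lambda>xs. enc_list (M xs)"] assms(2,3)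
  show ?thesis
    unfolding computable_list_def by (rule_tac computable_cong) (simp_all add: foldl_enc_list_Cons)
qed

lemma computable_list_rev: "computable_list n L \<Longrightarrow> computable_list n (\<lambda>xs. rev (L xs))"
  using computable_list_rev_map_append[OF computable_proj[of 0 "Suc n"] _ computable_list_Nil]
  by simp

lemma computable_list_append:
  "computable_list n L \<Longrightarrow> computable_list n M \<Longrightarrow> computable_list n (\<lambda>xs. L xs @ M xs)"
  using computable_list_rev_map_append[OF computable_proj[of 0 "Suc n"] computable_list_rev]
  by simp

lemma computable_list_map:
  "computable (Suc n) g \<Longrightarrow> computable_list n L \<Longrightarrow> computable_list n (\<lambda>xs. map (\<lambda>x. g (x # xs)) (L xs))"
  using computable_list_rev[OF computable_list_rev_map_append[OF _ _ computable_list_Nil]]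
  by simp

lemma computable_list_replicate:
  assumes "computable n N" "computable n h"
  shows "computable_list n (\<lambda>xs. replicate (N xs) (h xs))"
proof -
  have iterate: "((\<lambda>a. Suc (prod_encode (c, a))) ^^ m) 0 = enc_list (replicate m c)" for c m
    by (induction m) auto
  have "computable (Suc n) (\<lambda>ys. Suc (prod_encode (h (tl ys), ys ! 0)))"
    by (intro computable_Suc computable_prod_encode computable_proj computable_tl assms(2)) simp
  from computable_iterate[OF this assms(1) computable_zero] show ?thesis
    unfolding computable_list_def
    by (rule computable_cong) (simp_all add: iterate)
qed

lemma decidable_reduce:
  assumes "decidable enc' V' P'" and "computable 1 (\<lambda>xs. F (xs ! 0))"
    and "\<And>x. x \<in> V \<Longrightarrow> f x \<in> V' \<and> F (enc x) = enc' (f x) \<and> (P x \<longleftrightarrow> P' (f x))"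
  shows "decidable enc V P"
proof -
  obtain r where r: "\<forall>y\<in>V'. eval r [enc' y] (if P' y then 1 else 0)"
    using assms(1) by (auto simp: decidable_def)
  obtain rF where rF: "\<forall>xs. length xs = 1 \<longrightarrow> eval rF xs (F (xs ! 0))"
    using assms(2) by (auto simp: computable_def)
  have "eval (Comp r [rF]) [enc x] (if P x then 1 else 0)" if "x \<in> V" for x
    using that assms(3)[OF that] r rF[rule_format, of "[enc x]"]
    by (intro eval_Comp[where ys="[F (enc x)]"]) auto
  then show ?thesis unfolding decidable_def by blast
qed

lemma decidable_Not:
  assumes "decidable enc V P" shows "decidable enc V (\<lambda>x. \<not> P x)"
proof -
  obtain r where r: "\<forall>x\<in>V. eval r [enc x] (if P x then 1 else 0)"
    using assms by (auto simp: decidable_def)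
  obtain rN where rN: "\<forall>xs. length xs = 1 \<longrightarrow> eval rN xs (1 - xs ! 0)"
    using computable_diff[OF computable_const computable_proj, of 0 1 1] by (auto simp: computable_def)
  have "eval (Comp rN [r]) [enc x] (if \<not> P x then 1 else 0)" if "x \<in> V" for x
    using that r rN[rule_format, of "[if P x then 1 else 0]"]
    by (intro eval_Comp[where ys="[if P x then 1 else 0]"]) auto
  then show ?thesis unfolding decidable_def by blast
qed

section \<open>Reduced words in a free group\<close>

definition inv_letter :: "'i \<times> bool \<Rightarrow> 'i \<times> bool" where
  "inv_letter l = (fst l, \<not> snd l)"

definition inv_word :: "('i \<times> bool) list \<Rightarrow> ('i \<times> bool) list" where
  "inv_word w = rev (map inv_letter w)"

definition reduced :: "('i \<times> bool) list \<Rightarrow> bool" where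
  "reduced = successively (\<lambda>a b. b \<noteq> inv_letter a)"

definition rmul :: "('i \<times> bool) list \<Rightarrow> 'i \<times> bool \<Rightarrow> ('i \<times> bool) list" where
  "rmul w l = (if w \<noteq> [] \<and> last w = inv_letter l then butlast w else w @ [l])"

lemma inv_letter_Pair [simp]: "inv_letter (i, b) = (i, \<not> b)"
  by (simp add: inv_letter_def)

lemma inv_word_Nil [simp]: "inv_word [] = []"
  and inv_word_Cons: "inv_word (l # w) = inv_word w @ [inv_letter l]"
  by (simp_all add: inv_word_def)

lemma word_over_append [simp]: "word_over k (u @ v) \<longleftrightarrow> word_over k u \<and> word_over k v"
  by (auto simp: word_over_def)

lemma word_over_inv_word [simp]: "word_over k (inv_word w) \<longleftrightarrow> word_over k w"
  by (auto simp: word_over_def inv_word_def inv_letter_def)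

lemma reduced_snoc: "reduced (w @ [l]) \<longleftrightarrow> reduced w \<and> (w = [] \<or> l \<noteq> inv_letter (last w))"
  unfolding reduced_def by (auto simp: successively_append_iff)

lemma reduced_butlast: "reduced w \<Longrightarrow> reduced (butlast w)"
  by (cases w rule: rev_cases) (auto simp: reduced_snoc)

lemma reduced_rmul: "reduced w \<Longrightarrow> reduced (rmul w l)"
  unfolding rmul_def by (auto simp: reduced_snoc reduced_butlast inv_letter_def)

lemma rmul_rmul_inv_letter:
  assumes "reduced w" shows "rmul (rmul w l) (inv_letter l) = w"
proof (cases "w \<noteq> [] \<and> last w = inv_letter l")
  case True
  then obtain v where v: "w = v @ [inv_letter l]" by (metis append_butlast_last_id)
  then have "v = [] \<or> last v \<noteq> l" using assms by (auto simp: reduced_snoc inv_letter_def)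
  then show ?thesis using v by (auto simp: rmul_def inv_letter_def)
next
  case False
  then show ?thesis by (auto simp: rmul_def inv_letter_def)
qed

lemma prefix_rmul:
  assumes "prefix v w" "\<not> (w = v \<and> v \<noteq> [] \<and> last v = inv_letter l)"
  shows "prefix v (rmul w l)"
proof -
  obtain t where t: "w = v @ t" using assms(1) by (auto simp: prefix_def)
  show ?thesis
  proof (cases "w \<noteq> [] \<and> last w = inv_letter l")
    case True
    then have "t \<noteq> []" using assms(2) t by auto
    then show ?thesis using True t by (simp add: rmul_def butlast_append)
  next
    case False
    then show ?thesis using t by (auto simp: rmul_def)
  qed
qed

lemma prefix_rmul_enter:
  assumes "\<not> prefix v w" "prefix v (rmul w l)"
  shows "v = w @ [l]"
proof (cases "w \<noteq> [] \<and> last w = inv_letter l")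
  case True
  then have "prefix (rmul w l) w"
    by (metis append_butlast_last_id prefix_def rmul_def)
  then show ?thesis using assms by (meson prefix_order.trans)
next
  case False
  then have "rmul w l = w @ [l]" by (auto simp: rmul_def)
  then have "prefix v (w @ [l])" using assms(2) by simp
  then show ?thesis using assms(1) by (simp add: prefix_snoc)
qed

text \<open>Moves of a_i and a_j^-1 relative to the subtrees below a_0 and a_0 a_j^-1 in the
  Cayley tree.\<close>

lemma rmul_enter_root:
  assumes "\<not> prefix [(0, False)] w" "rmul w (i, False) = [(0, False)]"
  shows "i = (0::int)"
  using prefix_rmul_enter[of "[(0, False)]" w "(i, False)"] assms by simp

lemma rmul_outside_root:
  assumes "\<not> prefix [(0::int, False)] w" "rmul w (i, False) \<noteq> [(0, False)]"
  shows "\<not> prefix [(0, False)] (rmul (rmul w (i, False)) (j, True))"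
proof
  have out: "\<not> prefix [(0, False)] (rmul w (i, False))"
  proof
    assume "prefix [(0, False)] (rmul w (i, False))"
    then have "[(0, False)] = w @ [(i, False)]" using prefix_rmul_enter assms(1) by blast
    then show False using assms(2) by (simp add: rmul_def)
  qed
  assume "prefix [(0, False)] (rmul (rmul w (i, False)) (j, True))"
  then have "[(0, False)] = rmul w (i, False) @ [(j, True)]" using prefix_rmul_enter out by blast
  then show False by (cases "rmul w (i, False)") simp_all
qed

lemma rmul_inside_root:
  assumes "prefix [(0::int, False)] w" "\<forall>j. \<not> prefix [(0, False), (j, True)] w"
  shows "prefix [(0, False)] (rmul (rmul w (i, False)) (j, True))"
    and "\<not> prefix [(0, False), (j', True)] (rmul (rmul w (i, False)) (j, True))"
proof -
  have ne: "rmul w (i, False) \<noteq> [(0, False)]"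
  proof
    assume "rmul w (i, False) = [(0, False)]"
    then have "w = [(0, False), (i, True)]" using assms(1)
      by (cases w rule: rev_cases) (simp_all add: rmul_def split: if_splits)
    then show False using assms(2) by simp
  qed
  have "prefix [(0, False)] (rmul w (i, False))" using assms(1) by (simp add: prefix_rmul)
  then show "prefix [(0, False)] (rmul (rmul w (i, False)) (j, True))" using ne by (simp add: prefix_rmul)
  have out: "\<not> prefix [(0, False), (j', True)] (rmul w (i, False))"
  proof
    assume "prefix [(0, False), (j', True)] (rmul w (i, False))"
    then have "[(0, False), (j', True)] = w @ [(i, False)]" using prefix_rmul_enter assms(2) by blast
    then show False by (cases w rule: rev_cases) simp_all
  qed
  show "\<not> prefix [(0, False), (j', True)] (rmul (rmul w (i, False)) (j, True))"
  proof
    assume "prefix [(0, False), (j', True)] (rmul (rmul w (i, False)) (j, True))"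
    then have "[(0, False), (j', True)] = rmul w (i, False) @ [(j, True)]"
      using prefix_rmul_enter out by blast
    then show False using ne by (cases "rmul w (i, False)" rule: rev_cases) simp_all
  qed
qed

lemma rmul_branch:
  assumes "prefix [(0::int, False), (j0, True)] w" "\<not> (w = [(0, False), (j0, True)] \<and> i = j0)"
  shows "rmul w (i, False) \<noteq> [(0, False)]"
    and "prefix [(0, False), (j0, True)] (rmul (rmul w (i, False)) (j, True))"
proof -
  have "prefix [(0, False), (j0, True)] (rmul w (i, False))"
    using assms prefix_rmul[of "[(0, False), (j0, True)]" w "(i, False)"] by auto
  then show "rmul w (i, False) \<noteq> [(0, False)]"
    and "prefix [(0, False), (j0, True)] (rmul (rmul w (i, False)) (j, True))"
    by (auto simp: prefix_rmul)
qed

section \<open>An action of the free product on states\<close>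

text \<open>A state (pos, c, L) is a reduced word pos in the free group on letters a_i (i an integer),
  a counter c, and a G-labelling L of reduced words.  A generator of G multiplies the label at
  pos; x and y multiply pos by a_c and a_(c-1), and z shifts the counter.  Relators of G multiply
  a label by 1 and rmul undoes free cancellation on reduced words, so this is an action of G * F.\<close>

type_synonym 'a state = "(int \<times> bool) list \<times> int \<times> ((int \<times> bool) list \<Rightarrow> 'a)"

definition letter_val :: "('a, 'b) monoid_scheme \<Rightarrow> 'a list \<Rightarrow> letter \<Rightarrow> 'a" where
  "letter_val G gens l = (if snd l then inv\<^bsub>G\<^esub> (gens ! fst l) else gens ! fst l)"

fun act_letter :: "('a, 'b) monoid_scheme \<Rightarrow> 'a list \<Rightarrow> letter \<Rightarrow> 'a state \<Rightarrow> 'a state" where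
  "act_letter G gens (i, b) (pos, c, L) =
    (if i < length gens then (pos, c, L(pos := L pos \<otimes>\<^bsub>G\<^esub> letter_val G gens (i, b)))
     else if i = length gens then (rmul pos (c, b), c, L)
     else if i = Suc (length gens) then (rmul pos (c - 1, b), c, L)
     else if i = Suc (Suc (length gens)) then (pos, if b then c - 1 else c + 1, L)
     else (pos, c, L))"

definition act_word :: "('a, 'b) monoid_scheme \<Rightarrow> 'a list \<Rightarrow> word \<Rightarrow> 'a state \<Rightarrow> 'a state" where
  "act_word G gens w s = fold (act_letter G gens) w s"

definition valid_state :: "('a, 'b) monoid_scheme \<Rightarrow> 'a state \<Rightarrow> bool" where
  "valid_state G s \<longleftrightarrow> reduced (fst s) \<and> (\<forall>p. snd (snd s) p \<in> carrier G)"

lemma act_word_Nil [simp]: "act_word G gens [] s = s"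
  and act_word_Cons [simp]: "act_word G gens (l # w) s = act_word G gens w (act_letter G gens l s)"
  and act_word_append [simp]: "act_word G gens (u @ v) s = act_word G gens v (act_word G gens u s)"
  by (simp_all add: act_word_def)

lemma piG_Nil [simp]: "piG G gens [] = \<one>\<^bsub>G\<^esub>"
  and piG_Cons: "piG G gens (l # w) = letter_val G gens l \<otimes>\<^bsub>G\<^esub> piG G gens w"
  by (simp_all add: piG_def letter_val_def)

locale group_with_gens = group G for G :: "('a, 'b) monoid_scheme" (structure) +
  fixes gens :: "'a list"
  assumes gens_carrier: "set gens \<subseteq> carrier G"
begin

lemma letter_val_closed: "fst l < length gens \<Longrightarrow> letter_val G gens l \<in> carrier G"
  using gens_carrier nth_mem by (fastforce simp: letter_val_def)

lemma piG_closed: "word_over (length gens) w \<Longrightarrow> piG G gens w \<in> carrier G"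
  by (induction w) (auto simp: piG_Cons word_over_def letter_val_closed)

lemma piG_append:
  assumes "word_over (length gens) u" "word_over (length gens) v"
  shows "piG G gens (u @ v) = piG G gens u \<otimes> piG G gens v"
  using assms(1)
proof (induction u)
  case Nil
  then show ?case using piG_closed[OF assms(2)] by simp
next
  case (Cons l u)
  then have "word_over (length gens) u" "fst l < length gens" by (auto simp: word_over_def)
  then show ?case
    using Cons.IH piG_closed[OF assms(2)] by (simp add: piG_Cons m_assoc letter_val_closed piG_closed)
qed

lemma piG_inv_word: "word_over (length gens) w \<Longrightarrow> piG G gens (inv_word w) = inv (piG G gens w)"
proof (induction w)
  case (Cons l w)
  then have w: "word_over (length gens) w" and l: "fst l < length gens" by (auto simp: word_over_def)
  have "letter_val G gens (inv_letter l) = inv (letter_val G gens l)"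
    using l gens_carrier nth_mem by (fastforce simp: letter_val_def inv_letter_def)
  moreover have "piG G gens [inv_letter l] = letter_val G gens (inv_letter l)"
    using l by (simp add: piG_Cons letter_val_closed inv_letter_def)
  ultimately have "piG G gens [inv_letter l] = inv (letter_val G gens l)" by simp
  moreover have "word_over (length gens) [inv_letter l]"
    using l by (simp add: word_over_def inv_letter_def)
  ultimately show ?case
    using Cons.IH[OF w] l w
    by (simp add: inv_word_Cons piG_append piG_Cons piG_closed letter_val_closed inv_mult_group)
qed simp

lemma act_letter_valid: "valid_state G s \<Longrightarrow> valid_state G (act_letter G gens l s)"
  by (cases l; cases s) (auto simp: valid_state_def reduced_rmul letter_val_closed)

lemma act_word_valid: "valid_state G s \<Longrightarrow> valid_state G (act_word G gens w s)"
  by (induction w arbitrary: s) (auto simp: act_letter_valid)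

lemma act_letter_cancel:
  assumes "valid_state G s" shows "act_letter G gens (a, \<not> b) (act_letter G gens (a, b) s) = s"
proof -
  obtain pos c L where s: "s = (pos, c, L)" by (cases s)
  have "reduced pos" and L: "\<And>p. L p \<in> carrier G" using assms s by (auto simp: valid_state_def)
  then have "rmul (rmul pos (d, b)) (d, \<not> b) = pos" for d
    using rmul_rmul_inv_letter[of pos "(d, b)"] by simp
  moreover have "L pos \<otimes> letter_val G gens (a, b) \<otimes> letter_val G gens (a, \<not> b) = L pos"
    if "a < length gens"
    using that L[of pos] gens_carrier nth_mem
    by (cases b) (fastforce simp: letter_val_def m_assoc)+
  ultimately show ?thesis using s by auto
qed

lemma act_word_over_gens:
  assumes "word_over (length gens) r" "\<forall>p. L p \<in> carrier G"
  shows "act_word G gens r (pos, c, L) = (pos, c, L(pos := L pos \<otimes> piG G gens r))"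
  using assms
proof (induction r arbitrary: L)
  case (Cons l r)
  then have r: "word_over (length gens) r" and l: "fst l < length gens"
    by (auto simp: word_over_def)
  obtain i b where ib: "l = (i, b)" by (cases l)
  let ?L = "L(pos := L pos \<otimes> letter_val G gens l)"
  have L: "\<forall>p. ?L p \<in> carrier G" using Cons.prems(2) l by (simp add: letter_val_closed)
  have "act_word G gens (l # r) (pos, c, L) = act_word G gens r (pos, c, ?L)"
    using l ib by simp
  also have "\<dots> = (pos, c, ?L(pos := ?L pos \<otimes> piG G gens r))"
    by (rule Cons.IH[OF r L])
  also have "\<dots> = (pos, c, L(pos := L pos \<otimes> piG G gens (l # r)))"
    using Cons.prems(2) l r by (simp add: piG_Cons m_assoc letter_val_closed piG_closed)
  finally show ?case .
qed (simp add: r_one)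

lemma fp_eq_act_word: "fp_eq G gens u v \<Longrightarrow> valid_state G s \<Longrightarrow> act_word G gens u s = act_word G gens v s"
proof (induction arbitrary: s rule: fp_eq.induct)
  case (fp_cancel u a b v)
  then show ?case using act_letter_cancel[OF act_word_valid] by simp
next
  case (fp_rel r u v)
  obtain pos c L where e: "act_word G gens u s = (pos, c, L)" by (cases "act_word G gens u s")
  then have "\<forall>p. L p \<in> carrier G"
    using act_word_valid[OF fp_rel(3), of u] by (simp add: valid_state_def)
  then show ?case using e act_word_over_gens[OF fp_rel(1)] fp_rel(2) by simp
qed simp_all

end

section \<open>Dominoes\<close>

text \<open>With x, y, z the letters k, k+1, k+2 (k the number of generators of G), node i is the word
  z^i x z^-i for i \<ge> 0, acting as a_i, and node -1 is y, acting as a_-1.\<close>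

definition node_word :: "nat \<Rightarrow> int \<Rightarrow> bool \<Rightarrow> word" where
  "node_word k i b = (if i < 0 then [(Suc k, b)]
     else replicate (nat i) (Suc (Suc k), False) @ [(k, b)] @ replicate (nat i) (Suc (Suc k), True))"

type_synonym domino = "int \<times> word \<times> int"

fun domino_word :: "nat \<Rightarrow> domino \<Rightarrow> word" where
  "domino_word k (i, u, j) = node_word k i False @ u @ node_word k j True"

text \<open>No admissible domino ends at node 0, so a_0 a_j^-1 is reduced for every end node j.\<close>

definition admissible_dominoes :: "nat \<Rightarrow> domino set \<Rightarrow> bool" where
  "admissible_dominoes k D \<longleftrightarrow> (\<forall>(i, u, j)\<in>D. -1 \<le> i \<and> -1 \<le> j \<and> j \<noteq> 0 \<and> word_over k u)"

inductive domino_path :: "domino set \<Rightarrow> int \<Rightarrow> word \<Rightarrow> int \<Rightarrow> bool" for D i where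
  domino_path_Nil: "domino_path D i [] i"
| domino_path_snoc: "domino_path D i u j \<Longrightarrow> (j, v, l) \<in> D \<Longrightarrow> domino_path D i (u @ v) l"

lemma inv_word_node_word: "inv_word (node_word k i b) = node_word k i (\<not> b)"
  by (simp add: node_word_def inv_word_def replicate_app_Cons_same)

lemma domino_path_word_over:
  "domino_path D i u j \<Longrightarrow> \<forall>(i, v, j)\<in>D. word_over k v \<Longrightarrow> word_over k u"
  by (induction rule: domino_path.induct) (auto simp: word_over_def)

lemma act_word_z_power:
  "act_word G gens (replicate n (Suc (Suc (length gens)), b)) (pos, c, L)
     = (pos, if b then c - int n else c + int n, L)"
  by (induction n arbitrary: c) auto

lemma act_node_word:
  "-1 \<le> i \<Longrightarrow> act_word G gens (node_word (length gens) i b) (pos, 0, L) = (rmul pos (i, b), 0, L)"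
proof (cases "i < 0")
  case True
  moreover assume "-1 \<le> i"
  ultimately have "i = -1" by simp
  then show ?thesis by (simp add: node_word_def)
qed (simp add: node_word_def act_word_z_power)

context group_with_gens
begin

lemma act_domino_word:
  assumes "-1 \<le> i" "-1 \<le> j" "word_over (length gens) u" "\<forall>p. L p \<in> carrier G"
  shows "act_word G gens (domino_word (length gens) (i, u, j)) (pos, 0, L)
    = (let P = rmul pos (i, False) in (rmul P (j, True), 0, L(P := L P \<otimes> piG G gens u)))"
  using assms by (simp add: act_node_word act_word_over_gens Let_def)

text \<open>The invariant of states reached by dominoes from the identity.\<close>

definition domino_inv :: "domino set \<Rightarrow> 'a state \<Rightarrow> bool" where
  "domino_inv D s \<longleftrightarrow> (case s of (pos, c, L) \<Rightarrow> c = 0 \<and> (\<forall>p. L p \<in> carrier G) \<and>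
     ((\<not> prefix [(0, False)] pos \<and> L [(0, False)] = \<one>)
      \<or> (prefix [(0, False)] pos \<and> (\<forall>j. \<not> prefix [(0, False), (j, True)] pos))
      \<or> (\<exists>j u. prefix [(0, False), (j, True)] pos \<and> domino_path D 0 u j
           \<and> L [(0, False)] = piG G gens u)))"

lemma domino_inv_enter_branch:
  assumes d: "(i, u, j) \<in> D" and D: "\<forall>(i, v, j)\<in>D. word_over (length gens) v"
    and L: "\<forall>p. L p \<in> carrier G"
    and path: "domino_path D 0 u0 i" and root: "L [(0, False)] = piG G gens u0"
  shows "domino_inv D ([(0, False), (j, True)], 0, L([(0, False)] := L [(0, False)] \<otimes> piG G gens u))"
proof -
  have "word_over (length gens) u" "word_over (length gens) u0"
    using d D domino_path_word_over[OF path D] by auto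
  then show ?thesis
    using domino_path_snoc[OF path d] root L
    by (auto simp: domino_inv_def piG_append piG_closed)
qed

lemma domino_inv_domino_step:
  assumes inv: "domino_inv D (pos, 0, L)" and d: "(i, u, j) \<in> D"
    and D: "\<forall>(i, u, j)\<in>D. j \<noteq> 0 \<and> word_over (length gens) u"
  defines "P \<equiv> rmul pos (i, False)"
  shows "domino_inv D (rmul P (j, True), 0, L(P := L P \<otimes> piG G gens u))"
proof -
  let ?r = "[(0::int, False)]" and ?b = "\<lambda>j. [(0::int, False), (j, True)]"
  have D_over: "\<forall>(i, v, j)\<in>D. word_over (length gens) v" using D by auto
  have L: "\<forall>p. L p \<in> carrier G" using inv by (simp add: domino_inv_def)
  have L': "\<forall>p. (L(P := L P \<otimes> piG G gens u)) p \<in> carrier G"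
    using L d D_over by (auto simp: piG_closed)
  have enter: "domino_inv D (rmul P (j, True), 0, L(P := L P \<otimes> piG G gens u))"
    if "P = ?r" "domino_path D 0 u0 i" "L ?r = piG G gens u0" for u0
    using domino_inv_enter_branch[OF d D_over L that(2,3)] that(1) d D by (auto simp: rmul_def)
  consider (outside) "\<not> prefix ?r pos" "L ?r = \<one>"
    | (inside) "prefix ?r pos" "\<forall>j. \<not> prefix (?b j) pos"
    | (branch) j0 u0 where "prefix (?b j0) pos" "domino_path D 0 u0 j0" "L ?r = piG G gens u0"
    using inv by (auto simp: domino_inv_def)
  then show ?thesis
  proof cases
    case outside
    show ?thesis
    proof (cases "P = ?r")
      case True
      then have "domino_path D 0 [] i"
        using rmul_enter_root[OF outside(1) True[unfolded P_def]] by (simp add: domino_path_Nil)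
      then show ?thesis using enter[OF True] outside(2) by simp
    next
      case False
      then show ?thesis using rmul_outside_root[OF outside(1)] outside(2) L'
        by (simp add: domino_inv_def P_def)
    qed
  next
    case inside
    then show ?thesis using rmul_inside_root[OF inside] L' by (simp add: domino_inv_def P_def)
  next
    case branch
    show ?thesis
    proof (cases "pos = ?b j0 \<and> i = j0")
      case True
      then have "P = ?r" by (simp add: P_def rmul_def)
      then show ?thesis using enter branch True by simp
    next
      case False
      then have "P \<noteq> ?r" "prefix (?b j0) (rmul P (j, True))"
        using rmul_branch[OF branch(1) False] by (simp_all add: P_def)
      then show ?thesis using branch L' by (auto simp: domino_inv_def)
    qed
  qed
qed

lemma domino_inv_init: "domino_inv D ([], 0, \<lambda>_. \<one>)"
  by (simp add: domino_inv_def)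

lemma domino_inv_act_concat:
  assumes "set ws \<subseteq> domino_word (length gens) ` D" "domino_inv D s"
    and D: "admissible_dominoes (length gens) D"
  shows "domino_inv D (act_word G gens (concat ws) s)"
  using assms(1,2)
proof (induction ws arbitrary: s)
  case (Cons x ws)
  obtain i u j where d: "(i, u, j) \<in> D" and x: "x = domino_word (length gens) (i, u, j)"
    using Cons.prems(1) by auto
  obtain pos L where s: "s = (pos, 0, L)" and L: "\<forall>p. L p \<in> carrier G"
    using Cons.prems(2) by (cases s) (simp add: domino_inv_def)
  have "-1 \<le> i" "-1 \<le> j" "word_over (length gens) u"
    using d D by (auto simp: admissible_dominoes_def)
  then have "act_word G gens x s = (rmul (rmul pos (i, False)) (j, True), 0,
      L(rmul pos (i, False) := L (rmul pos (i, False)) \<otimes> piG G gens u))"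
    using act_domino_word[OF _ _ _ L] by (simp add: s x Let_def)
  moreover have "\<forall>(i, u, j)\<in>D. j \<noteq> 0 \<and> word_over (length gens) u"
    using D by (auto simp: admissible_dominoes_def)
  ultimately have "domino_inv D (act_word G gens x s)"
    using domino_inv_domino_step[OF Cons.prems(2)[unfolded s] d] by simp
  then show ?case using Cons by simp
qed simp

lemma act_xyinv_power:
  "P = [] \<or> last P = (-1, True) \<Longrightarrow>
    act_word G gens (concat (replicate n (word_xyinv (length gens)))) (P, 0, L)
      = (P @ concat (replicate n [(0, False), (-1, True)]), 0, L)"
  by (induction n arbitrary: P) (auto simp: word_xyinv_def rmul_def)

lemma domino_path_of_fp_eq:
  assumes D: "admissible_dominoes (length gens) D"
    and ws: "set ws \<subseteq> domino_word (length gens) ` D"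
    and eq: "fp_eq G gens (concat ws) (concat (replicate (Suc n) (word_xyinv (length gens))))"
  shows "\<exists>u. domino_path D 0 u (-1) \<and> piG G gens u = \<one>"
proof -
  let ?s = "([], 0, \<lambda>_. \<one>) :: 'a state"
  have "valid_state G ?s" by (simp add: valid_state_def reduced_def)
  then have "act_word G gens (concat ws) ?s
      = ([(0, False), (-1, True)] @ concat (replicate n [(0, False), (-1, True)]), 0, \<lambda>_. \<one>)"
    using fp_eq_act_word[OF eq] act_xyinv_power[of "[]" "Suc n"] by simp
  moreover have "domino_inv D (act_word G gens (concat ws) ?s)"
    using domino_inv_act_concat[OF ws domino_inv_init D] .
  ultimately show ?thesis by (auto simp: domino_inv_def)
qed

end

declare fp_trans [trans]

lemma fp_eq_append_cong: "fp_eq G gens u v \<Longrightarrow> fp_eq G gens (p @ u @ q) (p @ v @ q)"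
proof (induction rule: fp_eq.induct)
  case (fp_cancel u a b v)
  then show ?case using fp_eq.fp_cancel[where u="p @ u" and v="v @ q"] by simp
next
  case (fp_rel r u v)
  then show ?case using fp_eq.fp_rel[where u="p @ u" and v="v @ q"] by simp
qed (auto intro: fp_eq.intros)

lemma fp_eq_inv_word_cancel: "fp_eq G gens (p @ inv_word v @ v @ q) (p @ q)"
proof (induction v arbitrary: p q)
  case (Cons l v)
  have "fp_eq G gens ((p @ inv_word v) @ [(fst l, \<not> snd l), (fst l, \<not> \<not> snd l)] @ (v @ q))
      ((p @ inv_word v) @ (v @ q))"
    by (rule fp_cancel)
  then show ?case using Cons.IH fp_trans by (fastforce simp: inv_word_Cons inv_letter_def)
qed (simp add: fp_refl)

lemma fp_eq_of_domino_path:
  assumes "domino_path D i u j"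
  shows "\<exists>ws. set ws \<subseteq> domino_word k ` D \<and> (ws = [] \<longrightarrow> i = j)
    \<and> fp_eq G gens (concat ws) (node_word k i False @ u @ node_word k j True)"
  using assms
proof (induction rule: domino_path.induct)
  case domino_path_Nil
  show ?case
    using fp_eq_inv_word_cancel[of G gens "[]" "node_word k i True" "[]"]
    by (intro exI[of _ "[]"]) (simp add: inv_word_node_word fp_sym)
next
  case (domino_path_snoc u j v l)
  then obtain ws where ws: "set ws \<subseteq> domino_word k ` D"
    and eq: "fp_eq G gens (concat ws) (node_word k i False @ u @ node_word k j True)" by blast
  let ?ws = "ws @ [domino_word k (j, v, l)]"
  have "fp_eq G gens (concat ?ws)
      ((node_word k i False @ u @ node_word k j True) @ node_word k j False @ v @ node_word k l True)"
    using fp_eq_append_cong[OF eq, of "[]" "node_word k j False @ v @ node_word k l True"] by simp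
  also have "fp_eq G gens \<dots> ((node_word k i False @ u) @ v @ node_word k l True)"
    using fp_eq_inv_word_cancel[of G gens "node_word k i False @ u" "node_word k j False"]
    by (simp add: inv_word_node_word)
  finally have "fp_eq G gens (concat ?ws) (node_word k i False @ (u @ v) @ node_word k l True)"
    by simp
  moreover have "set ?ws \<subseteq> domino_word k ` D"
    using ws domino_path_snoc(2) by (auto simp del: domino_word.simps)
  ultimately show ?case by blast
qed

section \<open>The reduction\<close>

text \<open>State p of the automaton becomes node p + 1; node 0 (the letter x) is the start and node -1
  (the letter y) the end.\<close>

definition nfa_dominoes :: "nfa \<Rightarrow> word \<Rightarrow> domino list" where
  "nfa_dominoes A w =
     map (\<lambda>p. (0, [], int p + 1)) (fst (snd A))
     @ map (\<lambda>(p, a, q). (int p + 1, [a], int q + 1)) (fst A)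
     @ map (\<lambda>q. (int q + 1, inv_word w, -1)) (snd (snd A))"

definition reduction_words :: "nat \<Rightarrow> nfa \<Rightarrow> word \<Rightarrow> word list" where
  "reduction_words k A w = map (domino_word k) (nfa_dominoes A w)"

lemma nfa_dominoes_admissible:
  "nfa_over k A \<Longrightarrow> word_over k w \<Longrightarrow> admissible_dominoes k (set (nfa_dominoes A w))"
  by (auto simp: admissible_dominoes_def nfa_dominoes_def nfa_over_def word_over_def
      inv_word_def inv_letter_def)

lemma domino_path_trans:
  "domino_path D j v l \<Longrightarrow> domino_path D i u j \<Longrightarrow> domino_path D i (u @ v) l"
  by (induction rule: domino_path.induct) (auto simp flip: append_assoc intro: domino_path.intros)

lemma domino_path_of_nfa_path:
  "nfa_path (fst A) p v q \<Longrightarrow> domino_path (set (nfa_dominoes A w)) (int p + 1) v (int q + 1)"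
proof (induction v arbitrary: p)
  case (Cons a v)
  then obtain r where r: "(p, a, r) \<in> set (fst A)" "nfa_path (fst A) r v q" by auto
  have "domino_path (set (nfa_dominoes A w)) (int p + 1) ([] @ [a]) (int r + 1)"
    by (rule domino_path_snoc[OF domino_path_Nil]) (use r(1) in \<open>force simp: nfa_dominoes_def\<close>)
  then show ?case using Cons.IH[OF r(2)] domino_path_trans by fastforce
qed (simp add: domino_path_Nil)

lemma domino_path_of_nfa_lang:
  assumes "v \<in> nfa_lang A" shows "domino_path (set (nfa_dominoes A w)) 0 (v @ inv_word w) (-1)"
proof -
  obtain p q where p: "p \<in> set (fst (snd A))" and q: "q \<in> set (snd (snd A))"
    and path: "nfa_path (fst A) p v q"
    using assms by (auto simp: nfa_lang_def)
  have "domino_path (set (nfa_dominoes A w)) 0 ([] @ []) (int p + 1)"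
    using p by (intro domino_path_snoc[OF domino_path_Nil]) (auto simp: nfa_dominoes_def)
  from domino_path_trans[OF domino_path_of_nfa_path[OF path] this]
  have "domino_path (set (nfa_dominoes A w)) 0 v (int q + 1)" by simp
  then show ?thesis
    using q by (intro domino_path_snoc) (auto simp: nfa_dominoes_def)
qed

lemma nfa_path_snoc: "nfa_path T p u r \<Longrightarrow> (r, a, q) \<in> set T \<Longrightarrow> nfa_path T p (u @ [a]) q"
  by (induction u arbitrary: p) auto

lemma nfa_dominoes_path_cases:
  assumes "domino_path (set (nfa_dominoes A w)) 0 u j"
  shows "(j = 0 \<and> u = [])
    \<or> (\<exists>p p0. j = int p + 1 \<and> p0 \<in> set (fst (snd A)) \<and> nfa_path (fst A) p0 u p)
    \<or> (j = -1 \<and> (\<exists>v\<in>nfa_lang A. u = v @ inv_word w))"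
  using assms
proof (induction rule: domino_path.induct)
  case (domino_path_snoc u j v l)
  from domino_path_snoc(2) consider
      (init) p where "j = 0" "v = []" "l = int p + 1" "p \<in> set (fst (snd A))"
    | (trans) p a q where "j = int p + 1" "v = [a]" "l = int q + 1" "(p, a, q) \<in> set (fst A)"
    | (final) q where "j = int q + 1" "v = inv_word w" "l = -1" "q \<in> set (snd (snd A))"
    by (auto simp: nfa_dominoes_def)
  then show ?case
  proof cases
    case init
    then show ?thesis using domino_path_snoc.IH by auto
  next
    case trans
    then obtain p0 where "p0 \<in> set (fst (snd A))" "nfa_path (fst A) p0 u p"
      using domino_path_snoc.IH by auto
    then show ?thesis using trans nfa_path_snoc[of "fst A" p0 u p a q] by auto
  next
    case final
    then obtain p0 where "p0 \<in> set (fst (snd A))" "nfa_path (fst A) p0 u q"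
      using domino_path_snoc.IH by auto
    then have "u \<in> nfa_lang A" using final(4) by (auto simp: nfa_lang_def)
    then show ?thesis using final by auto
  qed
qed simp

lemma nfa_path_word_over: "nfa_over k A \<Longrightarrow> nfa_path (fst A) p u q \<Longrightarrow> word_over k u"
  by (induction u arbitrary: p) (auto simp: word_over_def nfa_over_def)

lemma nfa_lang_word_over: "nfa_over k A \<Longrightarrow> v \<in> nfa_lang A \<Longrightarrow> word_over k v"
  using nfa_path_word_over by (fastforce simp: nfa_lang_def)

lemma set_reduction_words: "set (reduction_words k A w) = domino_word k ` set (nfa_dominoes A w)"
  by (simp add: reduction_words_def)

context group_with_gens
begin

lemma reduction_words_sound:
  assumes A: "nfa_over (length gens) A" and w: "word_over (length gens) w"
    and "piG G gens w \<in> piG G gens ` nfa_lang A"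
  shows "\<exists>ws. ws \<noteq> [] \<and> set ws \<subseteq> set (reduction_words (length gens) A w)
    \<and> fp_eq G gens (concat ws) (word_xyinv (length gens))"
proof -
  let ?k = "length gens"
  obtain v where v: "v \<in> nfa_lang A" and eq: "piG G gens w = piG G gens v" using assms(3) by auto
  have "word_over ?k v" using nfa_lang_word_over[OF A v] .
  then have rel: "word_over ?k (v @ inv_word w)" "piG G gens (v @ inv_word w) = \<one>"
    using w eq by (simp_all add: piG_append piG_inv_word piG_closed)
  obtain ws where ws: "ws \<noteq> []" "set ws \<subseteq> set (reduction_words ?k A w)"
    and eq1: "fp_eq G gens (concat ws) ([(?k, False)] @ (v @ inv_word w) @ [(Suc ?k, True)])"
    using fp_eq_of_domino_path[OF domino_path_of_nfa_lang[OF v, of w], where k="?k" and G=G and gens=gens]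
    by (auto simp: set_reduction_words node_word_def)
  moreover have "fp_eq G gens ([(?k, False)] @ (v @ inv_word w) @ [(Suc ?k, True)]) (word_xyinv ?k)"
    using fp_rel[OF rel, where u="[(?k, False)]" and v="[(Suc ?k, True)]"] by (simp add: word_xyinv_def)
  ultimately show ?thesis using ws fp_trans by blast
qed

lemma reduction_words_complete:
  assumes A: "nfa_over (length gens) A" and w: "word_over (length gens) w"
    and ws: "set ws \<subseteq> set (reduction_words (length gens) A w)"
    and eq: "fp_eq G gens (concat ws) (concat (replicate (Suc n) (word_xyinv (length gens))))"
  shows "piG G gens w \<in> piG G gens ` nfa_lang A"
proof -
  obtain u where "domino_path (set (nfa_dominoes A w)) 0 u (-1)" and u: "piG G gens u = \<one>"
    using domino_path_of_fp_eq[OF nfa_dominoes_admissible[OF A w] _ eq] ws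
    by (auto simp: set_reduction_words)
  then obtain v where v: "v \<in> nfa_lang A" and uv: "u = v @ inv_word w"
    using nfa_dominoes_path_cases by fastforce
  have "word_over (length gens) v" using nfa_lang_word_over[OF A v] .
  then have "piG G gens v \<otimes> inv (piG G gens w) = \<one>"
    using u uv w by (simp add: piG_append piG_inv_word)
  then have "piG G gens w = piG G gens v"
    using w \<open>word_over (length gens) v\<close> piG_closed
    by (metis inv_closed inv_equality inv_inv)
  then show ?thesis using v by blast
qed

end

context group_with_gens
begin

lemma fp_mon_mem_reduction_words_iff:
  assumes "nfa_over (length gens) A" "word_over (length gens) w"
  shows "fp_mon_mem G gens (reduction_words (length gens) A w) (word_xyinv (length gens))
    \<longleftrightarrow> piG G gens w \<in> piG G gens ` nfa_lang A"
  using reduction_words_sound[OF assms] reduction_words_complete[OF assms, where n=0]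
  by (auto simp: fp_mon_mem_def)

lemma fp_sgp_disjoint_reduction_words_iff:
  assumes "nfa_over (length gens) A" "word_over (length gens) w"
  shows "\<not> fp_sgp_disjoint G gens (reduction_words (length gens) A w)
    \<longleftrightarrow> piG G gens w \<in> piG G gens ` nfa_lang A"
proof
  assume "\<not> fp_sgp_disjoint G gens (reduction_words (length gens) A w)"
  then obtain g ws ws' where "ws' \<noteq> []" "set ws' \<subseteq> {word_xyinv (length gens)}" "fp_eq G gens (concat ws') g"
    and "set ws \<subseteq> set (reduction_words (length gens) A w)" "fp_eq G gens (concat ws) g"
    by (auto simp: fp_sgp_disjoint_def fp_sgp_mem_def)
  moreover from this(1,2) obtain n where "ws' = replicate (Suc n) (word_xyinv (length gens))"
    by (metis empty_replicate gr0_conv_Suc length_greater_0_conv replicate_eqI singletonD subsetD)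
  ultimately show "piG G gens w \<in> piG G gens ` nfa_lang A"
    using reduction_words_complete[OF assms] fp_trans fp_sym by metis
next
  assume "piG G gens w \<in> piG G gens ` nfa_lang A"
  then obtain ws where "ws \<noteq> []" "set ws \<subseteq> set (reduction_words (length gens) A w)"
    "fp_eq G gens (concat ws) (word_xyinv (length gens))"
    using reduction_words_sound[OF assms] by blast
  moreover have "fp_sgp_mem G gens [word_xyinv (length gens)] (word_xyinv (length gens))"
    unfolding fp_sgp_mem_def by (rule exI[of _ "[word_xyinv (length gens)]"]) (simp add: fp_refl)
  ultimately show "\<not> fp_sgp_disjoint G gens (reduction_words (length gens) A w)"
    by (auto simp: fp_sgp_disjoint_def fp_sgp_mem_def)
qed

end

section \<open>Computability of the reduction\<close>

definition node_code :: "nat \<Rightarrow> nat \<Rightarrow> bool \<Rightarrow> nat list" where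
  "node_code k m b = replicate m (enc_letter (Suc (Suc k), False)) @ enc_letter (k, b)
     # replicate m (enc_letter (Suc (Suc k), True))"

definition inv_letter_code :: "nat \<Rightarrow> nat" where
  "inv_letter_code c = prod_encode (fst (prod_decode c), 1 - snd (prod_decode c))"

text \<open>The codes of the three kinds of reduction words, as functions of the code of a state or
  transition (first argument) and the code of the instance (second argument).\<close>

definition init_code :: "nat \<Rightarrow> nat list \<Rightarrow> nat" where
  "init_code k ys = enc_list (node_code k 0 False @ node_code k (Suc (ys ! 0)) True)"

definition trans_code :: "nat \<Rightarrow> nat list \<Rightarrow> nat" where
  "trans_code k ys = enc_list (node_code k (Suc (fst (prod_decode (ys ! 0)))) False
     @ fst (prod_decode (snd (prod_decode (ys ! 0))))
     # node_code k (Suc (snd (prod_decode (snd (prod_decode (ys ! 0)))))) True)"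

definition final_code :: "nat \<Rightarrow> nat list \<Rightarrow> nat" where
  "final_code k ys = enc_list (node_code k (Suc (ys ! 0)) False
     @ rev (map inv_letter_code (dec_list (snd (prod_decode (ys ! 1))))) @ [enc_letter (Suc k, True)])"

definition reduction_code :: "nat \<Rightarrow> nat list \<Rightarrow> nat list" where
  "reduction_code k xs =
     map (\<lambda>x. init_code k (x # xs)) (dec_list (fst (prod_decode (snd (prod_decode (fst (prod_decode (xs ! 0))))))))
     @ map (\<lambda>x. trans_code k (x # xs)) (dec_list (fst (prod_decode (fst (prod_decode (xs ! 0))))))
     @ map (\<lambda>x. final_code k (x # xs)) (dec_list (snd (prod_decode (snd (prod_decode (fst (prod_decode (xs ! 0))))))))"

lemma map_enc_letter_node_word:
  "map enc_letter (node_word k (int m) b) = node_code k m b"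
  by (simp add: node_word_def node_code_def)

lemma map_enc_letter_inv_word:
  "map enc_letter (inv_word w) = rev (map inv_letter_code (map enc_letter w))"
  by (simp add: inv_word_def rev_map inv_letter_code_def enc_letter_def inv_letter_def)

lemma reduction_code_correct:
  "enc_list (reduction_code k [prod_encode (enc_nfa A, enc_word w)]) = enc_words (reduction_words k A w)"
proof -
  let ?n = "prod_encode (enc_nfa A, enc_word w)"
  let ?tc = "\<lambda>(p, a, q). prod_encode (p, prod_encode (enc_letter a, q))"
  have node: "map enc_letter (node_word k (int p + 1) b) = node_code k (Suc p) b" for p b
    using map_enc_letter_node_word[of k "Suc p" b] by (simp add: add.commute)
  have I: "map (\<lambda>x. init_code k [x, ?n]) (fst (snd A))
      = map (\<lambda>p. enc_word (domino_word k (0, [], int p + 1))) (fst (snd A))"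
    using map_enc_letter_node_word[of k 0] by (simp add: init_code_def enc_word_def node)
  have T: "map (\<lambda>x. trans_code k [x, ?n]) (map ?tc (fst A))
      = map (\<lambda>t. enc_word (domino_word k (case t of (p, a, q) \<Rightarrow> (int p + 1, [a], int q + 1)))) (fst A)"
    by (auto simp: trans_code_def enc_word_def node)
  have F: "map (\<lambda>x. final_code k [x, ?n]) (snd (snd A))
      = map (\<lambda>q. enc_word (domino_word k (int q + 1, inv_word w, -1))) (snd (snd A))"
    using node_word_def[of k "-1" True]
    by (simp add: final_code_def enc_word_def node map_enc_letter_inv_word)
  have dec: "dec_list (fst (prod_decode (snd (prod_decode (fst (prod_decode ?n)))))) = fst (snd A)"
    "dec_list (fst (prod_decode (fst (prod_decode ?n)))) = map ?tc (fst A)"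
    "dec_list (snd (prod_decode (snd (prod_decode (fst (prod_decode ?n)))))) = snd (snd A)"
    by (simp_all add: enc_nfa_def)
  have "reduction_code k [?n] = map enc_word (reduction_words k A w)"
    unfolding reduction_code_def nth_Cons_0 dec I T F
    by (simp add: reduction_words_def nfa_dominoes_def comp_def case_prod_beta)
  then show ?thesis by (simp add: enc_words_def)
qed

lemma computable_list_node_code: "computable n M \<Longrightarrow> computable_list n (\<lambda>xs. node_code k (M xs) b)"
  unfolding node_code_def
  by (intro computable_list_append computable_list_replicate computable_list_Cons computable_const)

lemma computable_init_code: "computable 2 (init_code k)"
  unfolding computable_list_def[symmetric] init_code_def numeral_2_eq_2
  by (intro computable_list_append computable_list_node_code computable_const computable_Suc
      computable_proj) simp

lemma computable_trans_code: "computable 2 (trans_code k)"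
  unfolding computable_list_def[symmetric] trans_code_def numeral_2_eq_2
  by (intro computable_list_append computable_list_node_code computable_list_Cons computable_Suc
      computable_fst_prod_decode computable_snd_prod_decode computable_proj) simp_all

lemma computable_final_code: "computable 2 (final_code k)"
proof -
  have "computable_list 2 (\<lambda>ys. map (\<lambda>x. inv_letter_code ((x # ys) ! 0)) (dec_list (snd (prod_decode (ys ! 1)))))"
    unfolding inv_letter_code_def numeral_2_eq_2
    by (intro computable_list_map computable_list_dec_list computable_prod_encode computable_diff
        computable_const computable_fst_prod_decode computable_snd_prod_decode computable_proj) simp_all
  then have "computable_list 2 (\<lambda>ys. rev (map inv_letter_code (dec_list (snd (prod_decode (ys ! 1))))))"
    by (simp add: computable_list_rev)
  then show ?thesis
    unfolding computable_list_def[symmetric] final_code_def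
    by (intro computable_list_append computable_list_node_code computable_list_Cons computable_list_Nil
        computable_const computable_Suc computable_proj) simp_all
qed

lemma computable_reduction_code: "computable 1 (\<lambda>xs. enc_list (reduction_code k xs))"
  unfolding computable_list_def[symmetric] reduction_code_def
  using computable_init_code computable_trans_code computable_final_code
  by (intro computable_list_append computable_list_map computable_list_dec_list
      computable_fst_prod_decode computable_snd_prod_decode computable_proj)
     (simp_all add: numeral_2_eq_2)

lemma word_over_reduction_words:
  assumes "nfa_over k A" "word_over k w" "x \<in> set (reduction_words k A w)"
  shows "word_over (k + 3) x"
proof -
  have "word_over (k + 3) (node_word k i b)" for i b
    by (auto simp: node_word_def word_over_def)
  moreover have "word_over (k + 3) u" if "(i, u, j) \<in> set (nfa_dominoes A w)" for i u j
    using that nfa_dominoes_admissible[OF assms(1,2)]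
    by (fastforce simp: admissible_dominoes_def word_over_def)
  ultimately show ?thesis using assms(3) by (auto simp: reduction_words_def)
qed

lemma rational_membership_decidable_by_reduction:
  assumes "decidable enc_words {X. \<forall>x\<in>set X. word_over (length gens + 3) x} P"
    and "\<And>A w. nfa_over (length gens) A \<Longrightarrow> word_over (length gens) w \<Longrightarrow>
      P (reduction_words (length gens) A w) \<longleftrightarrow> piG G gens w \<in> piG G gens ` nfa_lang A"
  shows "rational_membership_decidable G gens"
proof -
  have "computable 1 (\<lambda>xs. enc_list (reduction_code (length gens) [xs ! 0]))"
    using computable_reduction_code by (rule computable_cong) (auto simp: length_Suc_conv)
  then show ?thesis
    unfolding rational_membership_decidable_def
    by (rule decidable_reduce[OF assms(1), where f="\<lambda>(A, w). reduction_words (length gens) A w"])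
       (auto simp: reduction_code_correct word_over_reduction_words assms(2))
qed

theorem mainTheorem2:
  fixes G :: "('a, 'b) monoid_scheme" and gens :: "'a list"
  assumes "group G"
    and "set gens \<subseteq> carrier G"
    and "generate G (set gens) = carrier G"
  shows "(FT_submonoid_xyinv_decidable G gens \<longrightarrow> rational_membership_decidable G gens)
       \<and> (sgp_disjoint_decidable G gens \<longrightarrow> rational_membership_decidable G gens)"
proof -
  \<comment> \<open>The reduction works for any finite list of elements.\<close>
  interpret group_with_gens G gens
    using assms(1,2) by (simp add: group_with_gens_def group_with_gens_axioms_def)
  show ?thesis
  proof (intro conjI impI)
    assume "FT_submonoid_xyinv_decidable G gens"
    then show "rational_membership_decidable G gens"
      unfolding FT_submonoid_xyinv_decidable_def
      by (rule rational_membership_decidable_by_reduction) (rule fp_mon_mem_reduction_words_iff)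
  next
    assume "sgp_disjoint_decidable G gens"
    then show "rational_membership_decidable G gens"
      unfolding sgp_disjoint_decidable_def
      by (rule rational_membership_decidable_by_reduction[OF decidable_Not])
         (rule fp_sgp_disjoint_reduction_words_iff)
  qed
qed

end
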